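(* For any $n\ge 1$, the image $\rho(\mathsf{F}(n))$ coincides with the set $\mathsf{Tr}(n)$ of triwords of size $n$.
   Context: A Dyck path of size $m$ is encoded as a word of length $2m$ in $\{0,1\}$ ($1$ = north-east step, $0$ = south-east step) whose prefixes all contain at least as many $1$'s as $0$'s and which has $m$ letters of each kind. A Dyck path $d$ is primitive if whenever $d=xy$ with $x,y$ Dyck paths, $x$ or $y$ is empty. A factor $x$ of $d$ (i.e. $d=pxs$) is a subpath if $x$ is a Dyck path. A subpath $x$ of $d$ is movable if $x$ is primitive and $d=p\,1\,0^{m}\,x\,s$ with $m>0$ and either $s$ empty or $s$ starting with $1$. For such a decomposition and any $\alpha,\beta$ with $\alpha+\beta=m$, $\beta>0$, set $d_{\alpha,\beta}:=p\,1\,0^{\alpha}\,x\,0^{\beta}\,s$. The dexter covering relation on Dyck paths of size $m$ is: $d$ is covered by $d'$ iff $d'=d_{\alpha,\beta}$ for some movable subpath $x$ of $d$ and such $\alpha,\beta$; the dexter order is its reflexive–transitive closure. For $n\ge1$, $\mathsf{F}(n)$ is the interval of Dyck paths of size $n+2$ between $1100(10)^n$ and $1\,1^n\,0^n\,100$ for the dexter order. A valley is a factor $01$, and its height is the ordinate of the point between the $0$ and the $1$. The map $\rho$ on $\mathsf{F}(n)$: reading $d$ from left to right, keep a counter $N_2$ (initially $0$) and build a word $u$ (initially empty): (i) each time two consecutive letters $1$ are read in $d$, except the first two letters of $d$, add $1$ to $N_2$; (ii) each time a valley of height $h$ is read, append the word $h\,2^{N_2}$ to $u$ and reset $N_2$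 to $0$. Then $\rho(d)$ is the final $u$. A triword of size $n$ is a word $u=u_1\cdots u_n$ with $u_i\in\{0,1,2\}$, $u_1\ne 2$, and such that $u_i=0$ implies $u_j\neq 1$ for all $j>i$; $\mathsf{Tr}(n)$ denotes their set. *)

theory Defs
  imports Main
begin

text \<open>Dyck paths are words over {0,1} (as nat lists): 1 = north-east, 0 = south-east.\<close>

definition dyck :: "nat list \<Rightarrow> bool" where
  "dyck w \<longleftrightarrow> set w \<subseteq> {0,1} \<and> count_list w 1 = count_list w 0 \<and>
     (\<forall>k\<le>length w. count_list (take k w) 0 \<le> count_list (take k w) 1)"

definition primitive :: "nat list \<Rightarrow> bool" where
  "primitive d \<longleftrightarrow> dyck d \<and>
     (\<forall>x y. d = x @ y \<and> dyck x \<and> dyck y \<longrightarrow> x = [] \<or> y = [])"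

definition dexter_cover :: "nat list \<Rightarrow> nat list \<Rightarrow> bool" where
  "dexter_cover d d' \<longleftrightarrow> dyck d \<and>
     (\<exists>p x s m \<alpha> \<beta>. primitive x \<and> m > 0 \<and> (s = [] \<or> hd s = 1) \<and>
        d = p @ [1] @ replicate m 0 @ x @ s \<and> \<alpha> + \<beta> = m \<and> \<beta> > 0 \<and>
        d' = p @ [1] @ replicate \<alpha> 0 @ x @ replicate \<beta> 0 @ s)"

definition dexter_le :: "nat list \<Rightarrow> nat list \<Rightarrow> bool" where
  "dexter_le = dexter_cover\<^sup>*\<^sup>*"

definition F :: "nat \<Rightarrow> nat list set" where
  "F n = {d. dyck d \<and> length d = 2 * (n + 2) \<and>
     dexter_le ([1,1,0,0] @ concat (replicate n [1,0])) d \<and>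
     dexter_le d ([1] @ replicate n 1 @ replicate n 0 @ [1,0,0])}"

definition height :: "nat list \<Rightarrow> nat \<Rightarrow> nat" where
  "height d i = count_list (take i d) 1 - count_list (take i d) 0"

definition rho_step :: "nat list \<Rightarrow> nat \<times> nat list \<Rightarrow> nat \<Rightarrow> nat \<times> nat list" where
  "rho_step d st i = (case st of (N2, u) \<Rightarrow>
     if d ! (i - 1) = 0 \<and> d ! i = 1 then (0, u @ [height d i] @ replicate N2 2)
     else if d ! (i - 1) = 1 \<and> d ! i = 1 \<and> i \<noteq> 1 then (N2 + 1, u)
     else (N2, u))"

definition rho :: "nat list \<Rightarrow> nat list" where
  "rho d = snd (foldl (rho_step d) (0, []) [1..<length d])"

definition Tr :: "nat \<Rightarrow> nat list set" where
  "Tr n = {u. length u = n \<and> set u \<subseteq> {0,1,2} \<and> (u \<noteq> [] \<longrightarrow> hd u \<noteq> 2) \<and>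
     (\<forall>i j. i < j \<and> j < n \<and> u ! i = 0 \<longrightarrow> u ! j \<noteq> 1)}"

end

theory Submission
  imports Defs
begin

text \<open>
  The paths of \<open>F n\<close> are exactly the paths \<open>1 P 0 Q\<close> in which \<open>P\<close> and \<open>Q\<close> are sequences
  of pyramids \<open>1\<^sup>k 0\<^sup>k\<close> with \<open>k > 0\<close>, \<open>P\<close> is not empty, there are \<open>n + 1\<close> up steps
  in \<open>P\<close> and \<open>Q\<close> together, and the last pyramid has size 1.
  Going up from the bottom path the first two letters stay \<open>11\<close>; going down from the top
  path two properties survive every covering step: each valley has height at most 1 and is
  no higher than any earlier point, and the last ascent is a single step after a descent.
  These three properties force the pyramid shape. Conversely, every pyramid path is reached
  from the bottom by merging unit pyramids, and reaches the top by lifting the ground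
  pyramids onto the plateau and merging all of them but the last.
  On a pyramid path, \<open>\<rho>\<close> emits \<open>1 2\<^sup>k\<^sup>-\<^sup>1\<close> before every plateau pyramid but the
  first and \<open>0 2\<^sup>k\<^sup>-\<^sup>1\<close> before every ground pyramid, \<open>k\<close> being the size of the previous
  pyramid. These words \<open>1 2\<^sup>a 1 2\<^sup>b \<dots> 0 2\<^sup>c 0 2\<^sup>d \<dots>\<close> are exactly the triwords.
\<close>

section \<open>Heights and Dyck paths\<close>

text \<open>Signed height after the first \<open>i\<close> letters; unlike \<^const>\<open>height\<close> it is not truncated at 0.\<close>

definition ht :: "nat list \<Rightarrow> nat \<Rightarrow> int" where
  "ht w i = int (count_list (take i w) 1) - int (count_list (take i w) 0)"

lemma ht_0 [simp]: "ht w 0 = 0"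
  by (simp add: ht_def)

lemma ht_Nil [simp]: "ht [] i = 0"
  by (simp add: ht_def)

lemma ht_append: "ht (a @ b) i = ht a i + ht b (i - length a)"
  by (simp add: ht_def)

lemma ht_Cons [simp]:
  "ht (c # w) i = (if i = 0 then 0 else (if c = 1 then 1 else if c = 0 then -1 else 0) + ht w (i - 1))"
  by (cases i) (simp_all add: ht_def)

lemma ht_length_le: "length w \<le> i \<Longrightarrow> ht w i = ht w (length w)"
  by (simp add: ht_def)

lemma count_list_replicate: "count_list (replicate m x) y = (if x = y then m else 0)"
  by (induction m) auto

lemma ht_replicate [simp]:
  "ht (replicate m c) i = (if c = 1 then int (min i m) else if c = 0 then - int (min i m) else 0)"
  by (simp add: ht_def count_list_replicate)

lemma ht_Suc:
  "i < length w \<Longrightarrow> ht w (Suc i) = ht w i + (if w ! i = 1 then 1 else if w ! i = 0 then -1 else 0)"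
  by (simp add: ht_def take_Suc_conv_app_nth)

lemma ht_take: "ht (take t w) i = ht w (min i t)"
  by (simp add: ht_def min.commute)

lemma ht_drop: "t \<le> length w \<Longrightarrow> ht (drop t w) i = ht w (t + i) - ht w t"
  using ht_append[of "take t w" "drop t w" "t + i"] by (simp add: ht_take)

lemma dyck_iff_ht:
  "dyck w \<longleftrightarrow> set w \<subseteq> {0, 1} \<and> ht w (length w) = 0 \<and> (\<forall>i \<le> length w. 0 \<le> ht w i)"
  unfolding dyck_def ht_def by auto

lemma dyck_ht_nonneg: "dyck w \<Longrightarrow> 0 \<le> ht w i"
  using ht_length_le[of w i] by (cases "i \<le> length w") (auto simp: dyck_iff_ht)

lemma dyck_ht_end: "dyck w \<Longrightarrow> length w \<le> i \<Longrightarrow> ht w i = 0"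
  by (auto simp: dyck_iff_ht dest: ht_length_le)

lemma dyck_Nil: "dyck []"
  by (simp add: dyck_iff_ht)

lemma dyck_append:
  assumes "dyck a" "dyck b" shows "dyck (a @ b)"
proof -
  have "0 \<le> ht (a @ b) i" for i
    using assms by (simp add: ht_append dyck_ht_nonneg)
  moreover have "ht (a @ b) (length (a @ b)) = 0"
    using assms by (simp add: ht_append dyck_ht_end)
  ultimately show ?thesis
    using assms by (auto simp: dyck_iff_ht)
qed

lemma dyck_take_drop:
  assumes "dyck w" "ht w t = 0"
  shows "dyck (take t w)" "dyck (drop t w)"
proof -
  have set: "set (take t w) \<subseteq> {0, 1}" "set (drop t w) \<subseteq> {0, 1}"
    using assms(1) by (auto simp: dyck_iff_ht dest: in_set_takeD in_set_dropD)
  have "ht (take t w) (length (take t w)) = 0"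
    using assms by (cases "t \<le> length w") (auto simp: ht_take dyck_ht_end)
  then show "dyck (take t w)"
    using set(1) dyck_ht_nonneg[OF assms(1)] by (simp add: dyck_iff_ht ht_take)
  show "dyck (drop t w)"
  proof (cases "t \<le> length w")
    case True
    have "ht (drop t w) (length (drop t w)) = 0"
      using True assms by (simp add: ht_drop dyck_ht_end)
    then show ?thesis
      using True set(2) dyck_ht_nonneg[OF assms(1)] assms(2) by (simp add: dyck_iff_ht ht_drop)
  qed (simp add: dyck_Nil)
qed

lemma dyck_wrap:
  assumes "dyck w" shows "dyck ([1] @ w @ [0])"
proof -
  have "0 \<le> ht ([1] @ w @ [0]) i" for i
  proof (cases "i \<le> Suc (length w)")
    case True
    then show ?thesis
      using dyck_ht_nonneg[OF assms, of "i - 1"] by (simp add: ht_append)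
  next
    case False
    then show ?thesis
      using dyck_ht_end[OF assms, of "i - 1"] by (simp add: ht_append)
  qed
  moreover have "ht ([1] @ w @ [0]) (length ([1] @ w @ [0])) = 0"
    using dyck_ht_end[OF assms] by (simp add: ht_append)
  moreover have "set ([1] @ w @ [0]) \<subseteq> {0, 1}"
    using assms by (simp add: dyck_iff_ht)
  ultimately show ?thesis
    by (simp add: dyck_iff_ht)
qed

lemma dyck_hd:
  assumes "dyck w" "w \<noteq> []" shows "hd w = 1"
proof -
  obtain c v where w: "w = c # v"
    using assms(2) by (cases w) auto
  have "c \<in> {0, 1}" "0 \<le> ht w 1"
    using assms(1) w by (auto simp: dyck_iff_ht dyck_ht_nonneg)
  then show ?thesis
    using w by (auto split: if_splits)
qed

lemma dyck_last:
  assumes "dyck w" "w \<noteq> []" shows "last w = 0"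
proof -
  obtain i where i: "length w = Suc i"
    using assms by (cases w) auto
  have "w ! i \<in> {0, 1}"
    using assms(1) i unfolding dyck_iff_ht by (metis lessI nth_mem subsetD)
  moreover have "0 \<le> ht w i" "ht w (Suc i) = 0"
    using assms i by (auto simp: dyck_ht_nonneg dyck_ht_end)
  moreover have "ht w (Suc i) = ht w i + (if w ! i = 1 then 1 else if w ! i = 0 then -1 else 0)"
    using ht_Suc[of i w] i by simp
  ultimately have "w ! i = 0"
    by (auto split: if_splits)
  then show ?thesis
    using i assms by (simp add: last_conv_nth)
qed

lemma primitiveI:
  assumes "dyck w" "\<And>i. 0 < i \<Longrightarrow> i < length w \<Longrightarrow> 0 < ht w i"
  shows "primitive w"
  unfolding primitive_def
proof (intro conjI assms allI impI)
  fix a b assume ab: "w = a @ b \<and> dyck a \<and> dyck b"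
  then have "ht w (length a) = 0"
    by (simp add: ht_append dyck_ht_end)
  then show "a = [] \<or> b = []"
    using assms(2)[of "length a"] ab by fastforce
qed

lemma primitive_ht_pos:
  assumes "primitive w" "0 < i" "i < length w" shows "0 < ht w i"
proof (rule ccontr)
  have "dyck w"
    using assms(1) by (simp add: primitive_def)
  moreover assume "\<not> 0 < ht w i"
  ultimately have "dyck (take i w)" "dyck (drop i w)"
    using dyck_take_drop[of w i] dyck_ht_nonneg[of w i] by auto
  moreover have "take i w \<noteq> []" "drop i w \<noteq> []"
    using assms by auto
  ultimately show False
    using assms(1) unfolding primitive_def by (metis append_take_drop_id)
qed

lemma primitive_unwrap:
  assumes "primitive w" "w \<noteq> []"
  obtains a where "w = [1] @ a @ [0]" "dyck a"
proof -
  have dw: "dyck w"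
    using assms(1) by (simp add: primitive_def)
  obtain c u where cu: "w = c # u"
    using assms(2) by (cases w) auto
  have "u \<noteq> []"
    using dyck_hd[OF dw assms(2)] dyck_last[OF dw assms(2)] cu by auto
  then obtain a e where "u = a @ [e]"
    by (metis rev_exhaust)
  then have w: "w = [1] @ a @ [0]"
    using dyck_hd[OF dw assms(2)] dyck_last[OF dw assms(2)] cu by simp
  have ht_a: "ht w (Suc i) = 1 + ht a i" if "i \<le> length a" for i
    using that by (simp add: w ht_append)
  have "0 \<le> ht a i" if "i \<le> length a" for i
    using primitive_ht_pos[OF assms(1), of "Suc i"] ht_a[OF that] that by (simp add: w)
  moreover have "ht a (length a) = 0"
    using dyck_ht_end[OF dw, of "length w"] ht_length_le[of a "Suc (length a)"] by (simp add: w ht_append)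
  moreover have "set a \<subseteq> {0, 1}"
    using dw by (simp add: w dyck_iff_ht)
  ultimately show ?thesis
    using that[OF w] by (simp add: dyck_iff_ht)
qed

lemma dyck_first_return:
  assumes "dyck w" "w \<noteq> []"
  obtains a b where "w = [1] @ a @ [0] @ b" "dyck a" "dyck b" "ht w (length a + 2) = 0"
    "\<And>i. 0 < i \<Longrightarrow> i \<le> length a + 1 \<Longrightarrow> 0 < ht w i"
proof -
  let ?return = "\<lambda>i. 0 < i \<and> ht w i = 0"
  have "?return (length w)"
    using assms by (simp add: dyck_iff_ht)
  define r where "r = (LEAST i. ?return i)"
  have r: "0 < r" "ht w r = 0" "r \<le> length w"
    using LeastI[of ?return, OF \<open>?return (length w)\<close>] Least_le[of ?return, OF \<open>?return (length w)\<close>]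
    by (simp_all add: r_def)
  have above: "0 < ht w i" if "0 < i" "i < r" for i
    using not_less_Least[of i ?return] that dyck_ht_nonneg[OF assms(1), of i] by (auto simp: r_def)
  have "primitive (take r w)"
    by (rule primitiveI) (use dyck_take_drop[OF assms(1) r(2)] above in \<open>auto simp: ht_take\<close>)
  moreover have "take r w \<noteq> []"
    using r assms(2) by simp
  ultimately obtain a where a: "take r w = [1] @ a @ [0]" "dyck a"
    by (rule primitive_unwrap)
  have "length (take r w) = r"
    using r(3) by simp
  then have "r = length a + 2"
    using a(1) by simp
  moreover have "w = [1] @ a @ [0] @ drop r w"
    using a(1) append_take_drop_id[of r w] by simp
  ultimately show ?thesis
    using that[OF _ a(2) dyck_take_drop(2)[OF assms(1) r(2)]] r(2) above by simp
qed

lemma ht_first_return: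
  assumes "dyck a"
  shows "j \<le> length a \<Longrightarrow> ht ([1] @ a @ [0] @ b) (Suc j) = 1 + ht a j"
    and "ht ([1] @ a @ [0] @ b) (length a + 2 + j) = ht b j"
  by (simp_all add: ht_append dyck_ht_end[OF assms])

section \<open>Pyramids\<close>

definition pyramid :: "nat \<Rightarrow> nat list" where
  "pyramid k = replicate k 1 @ replicate k 0"

definition pyramids :: "nat list \<Rightarrow> nat list" where
  "pyramids ks = concat (map pyramid ks)"

definition two_level :: "nat list \<Rightarrow> nat list \<Rightarrow> nat list" where
  "two_level ks qs = [1] @ pyramids ks @ [0] @ pyramids qs"

lemma pyramids_simps [simp]:
  "pyramids [] = []"
  "pyramids (k # ks) = pyramid k @ pyramids ks"
  "pyramids (ks @ qs) = pyramids ks @ pyramids qs"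
  by (simp_all add: pyramids_def)

lemma length_pyramid: "length (pyramid k) = 2 * k"
  by (simp add: pyramid_def)

lemma length_pyramids: "length (pyramids ks) = 2 * sum_list ks"
  by (induction ks) (simp_all add: pyramid_def)

lemma pyramids_hd: "pyramids ks = [] \<or> hd (pyramids ks) = 1"
proof (induction ks)
  case (Cons k ks)
  then show ?case
    by (cases k) (simp_all add: pyramid_def)
qed simp

lemma ht_pyramid: "ht (pyramid k) i = int (min i k) - int (min (i - k) k)"
  by (simp add: pyramid_def ht_append)

lemma primitive_pyramid: "primitive (pyramid k)"
proof (rule primitiveI)
  show "dyck (pyramid k)"
    by (auto simp: dyck_iff_ht ht_pyramid) (auto simp: pyramid_def)
qed (auto simp: ht_pyramid length_pyramid min_def)

lemma dyck_pyramids: "dyck (pyramids ks)"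
proof (induction ks)
  case (Cons k ks)
  then show ?case
    using primitive_pyramid[of k] by (simp add: dyck_append primitive_def)
qed (simp add: dyck_Nil)

lemma dyck_two_level: "dyck (two_level ks qs)"
  unfolding two_level_def using dyck_append[OF dyck_wrap dyck_pyramids, OF dyck_pyramids] by simp

section \<open>Valleys\<close>

definition valley :: "nat list \<Rightarrow> nat \<Rightarrow> bool" where
  "valley w j \<longleftrightarrow> 0 < j \<and> j < length w \<and> w ! (j - 1) = 0 \<and> w ! j = 1"

definition low_valleys :: "nat list \<Rightarrow> bool" where
  "low_valleys w \<longleftrightarrow> (\<forall>j. valley w j \<longrightarrow> ht w j \<le> 1 \<and> (\<forall>k. 0 < k \<and> k \<le> j \<longrightarrow> ht w j \<le> ht w k))"

definition last_ascent_single :: "nat list \<Rightarrow> bool" where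
  "last_ascent_single w \<longleftrightarrow> (\<exists>a j. w = a @ [1] @ replicate j 0 \<and> a \<noteq> [] \<and> last a = 0)"

lemma valley_append:
  "valley (xs @ ys) j \<longleftrightarrow>
    j < length xs \<and> valley xs j
    \<or> j = length xs \<and> xs \<noteq> [] \<and> last xs = 0 \<and> ys \<noteq> [] \<and> hd ys = 1
    \<or> length xs < j \<and> valley ys (j - length xs)"
proof (cases "j < length xs")
  case True
  then show ?thesis
    by (auto simp: valley_def nth_append)
next
  case False
  then show ?thesis
    by (cases "j = length xs")
      (auto simp: valley_def nth_append last_conv_nth hd_conv_nth Suc_diff_Suc)
qed

lemma valley_Cons: "valley w j \<Longrightarrow> valley (c # w) (Suc j)"
  using valley_append[of "[c]" w "Suc j"] by (simp add: valley_def)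

lemma valley_first_return:
  shows "valley a j \<Longrightarrow> valley ([1] @ a @ [0] @ b) (Suc j)"
    and "valley b j \<Longrightarrow> valley ([1] @ a @ [0] @ b) (length a + 2 + j)"
  using valley_append[of "[1] @ a @ [0]" b "length a + 2 + j"]
    valley_append[of a "[0] @ b" j] valley_Cons[of "a @ [0] @ b" j 1]
  by (auto simp: valley_def)

lemma pyramid_no_valley: "\<not> valley (pyramid k) j"
  by (auto simp: valley_def pyramid_def nth_append split: if_splits)

lemma ht_valley_pyramids: "valley (pyramids ks) j \<Longrightarrow> ht (pyramids ks) j = 0"
proof (induction ks arbitrary: j)
  case (Cons k ks)
  then show ?case
    using pyramid_no_valley[of k j] valley_append[of "pyramid k" "pyramids ks" j]
      ht_length_le[of "pyramid k" j]
    by (auto simp: ht_append ht_pyramid length_pyramid)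
qed (simp add: valley_def)

lemma valley_two_level_cases:
  assumes "valley (two_level ks qs) j"
  obtains "valley (pyramids ks) (j - 1)" "j \<le> length (pyramids ks)"
    | "length (pyramids ks) + 2 \<le> j" "ht (pyramids qs) (j - length (pyramids ks) - 2) = 0"
proof -
  let ?P = "pyramids ks" and ?Q = "pyramids qs"
  have "j < length ?P + 2 \<and> valley ([1] @ ?P @ [0]) j \<or> j = length ?P + 2
      \<or> length ?P + 2 < j \<and> valley ?Q (j - length ?P - 2)"
    using assms valley_append[of "[1] @ ?P @ [0]" ?Q j] by (auto simp: two_level_def)
  moreover have "valley ?P (j - 1) \<and> j \<le> length ?P" if "valley ([1] @ ?P @ [0]) j"
  proof -
    have "1 < j" "valley (?P @ [0]) (j - 1)"
      using that valley_append[of "[1]" "?P @ [0]" j] by (auto simp: valley_def)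
    then show ?thesis
      using valley_append[of ?P "[0]" "j - 1"] by (auto simp: valley_def)
  qed
  ultimately show ?thesis
    using that ht_valley_pyramids[of qs] by (auto simp: numeral_2_eq_2)
qed

lemma low_valleys_two_level: "low_valleys (two_level ks qs)"
  unfolding low_valleys_def
proof (intro allI impI)
  fix j
  let ?d = "two_level ks qs" and ?P = "pyramids ks" and ?Q = "pyramids qs"
  have ht_d: "i \<le> length ?P \<Longrightarrow> ht ?d (Suc i) = 1 + ht ?P i" for i
    using ht_first_return(1)[OF dyck_pyramids] by (simp add: two_level_def)
  assume "valley ?d j"
  then show "ht ?d j \<le> 1 \<and> (\<forall>k. 0 < k \<and> k \<le> j \<longrightarrow> ht ?d j \<le> ht ?d k)"
  proof (cases rule: valley_two_level_cases)
    case 1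
    then have "ht ?d j = 1"
      using ht_d[of "j - 1"] ht_valley_pyramids[of ks "j - 1"] by (simp add: valley_def)
    moreover have "1 \<le> ht ?d k" if "0 < k" "k \<le> j" for k
      using that 1 ht_d[of "k - 1"] dyck_ht_nonneg[OF dyck_pyramids, of ks "k - 1"] by simp
    ultimately show ?thesis
      by simp
  next
    case 2
    then have "length ?P + 2 + (j - length ?P - 2) = j"
      by simp
    then have "ht ?d j = 0"
      using ht_first_return(2)[OF dyck_pyramids, of ks ?Q "j - length ?P - 2"] 2(2)
      by (simp only: two_level_def)
    then show ?thesis
      using dyck_ht_nonneg[OF dyck_two_level] by simp
  qed
qed

lemma valley_free_word:
  assumes "set w \<subseteq> {0, 1}" "\<forall>j. \<not> valley w j"
  shows "\<exists>p q. w = replicate p 1 @ replicate q 0"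
  using assms
proof (induction w)
  case (Cons c w)
  then obtain p q where w: "w = replicate p 1 @ replicate q 0"
    using valley_Cons by fastforce
  show ?case
  proof (cases "c = 1")
    case True
    then show ?thesis
      using w by (intro exI[of _ "Suc p"] exI[of _ q]) simp
  next
    case False
    then have "c = 0"
      using Cons.prems(1) by simp
    moreover have "p = 0"
    proof (rule ccontr)
      assume "p \<noteq> 0"
      then have "valley (c # w) 1"
        using \<open>c = 0\<close> w by (cases p) (simp_all add: valley_def)
      then show False
        using Cons.prems(2) by blast
    qed
    ultimately show ?thesis
      using w by (intro exI[of _ 0] exI[of _ "Suc q"]) simp
  qed
qed simp

lemma dyck_valley_free:
  assumes "dyck w" "\<forall>j. \<not> valley w j"
  obtains k where "w = pyramid k"
proof -
  obtain p q where w: "w = replicate p 1 @ replicate q 0"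
    using valley_free_word[of w] assms by (auto simp: dyck_iff_ht)
  then have "p = q"
    using dyck_ht_end[OF assms(1), of "length w"] by (simp add: ht_append)
  then show ?thesis
    using that w by (simp add: pyramid_def)
qed

lemma flat_valleys_pyramids:
  assumes "dyck w" "\<forall>j. valley w j \<longrightarrow> ht w j = 0"
  shows "\<exists>ks. 0 \<notin> set ks \<and> w = pyramids ks"
  using assms
proof (induction "length w" arbitrary: w rule: less_induct)
  case less
  show ?case
  proof (cases "w = []")
    case False
    then obtain a b where w: "w = [1] @ a @ [0] @ b" "dyck a" "dyck b" "ht w (length a + 2) = 0"
      and pos: "\<And>i. 0 < i \<Longrightarrow> i \<le> length a + 1 \<Longrightarrow> 0 < ht w i"
      using dyck_first_return[OF less.prems(1)] by metis
    have "\<not> valley a j" for j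
    proof
      assume "valley a j"
      then have "valley w (Suc j)" "Suc j \<le> length a + 1"
        using valley_first_return(1) w(1) by (auto simp: valley_def)
      then show False
        using less.prems(2) pos[of "Suc j"] by auto
    qed
    then obtain k where "a = pyramid k"
      using dyck_valley_free[OF w(2)] by blast
    then have "[1] @ a @ [0] = pyramid (Suc k)"
      by (simp add: pyramid_def replicate_append_same)
    moreover have "\<forall>j. valley b j \<longrightarrow> ht b j = 0"
      using less.prems(2) valley_first_return(2) ht_first_return(2)[OF w(2)] w(1) by metis
    then obtain ks where "0 \<notin> set ks" "b = pyramids ks"
      using less.hyps[of b] w by auto
    ultimately show ?thesis
      using w(1) by (intro exI[of _ "Suc k # ks"]) simp
  qed (intro exI[of _ "[]"], simp)
qed

lemma low_valleys_imp_two_level: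
  assumes "dyck d" "d \<noteq> []" "low_valleys d"
  obtains ks qs where "0 \<notin> set (ks @ qs)" "d = two_level ks qs"
proof -
  obtain a b where d: "d = [1] @ a @ [0] @ b" "dyck a" "dyck b" "ht d (length a + 2) = 0"
    using dyck_first_return[OF assms(1,2)] by metis
  have low: "ht d j \<le> 1" "\<And>k. 0 < k \<Longrightarrow> k \<le> j \<Longrightarrow> ht d j \<le> ht d k" if "valley d j" for j
    using assms(3) that by (auto simp: low_valleys_def)
  have "ht a j = 0" if "valley a j" for j
    using low(1)[OF valley_first_return(1)[OF that, of b, folded d(1)]] ht_first_return(1)[OF d(2), of j b] that
      dyck_ht_nonneg[OF d(2), of j] d(1) by (simp add: valley_def)
  then obtain ks where ks: "0 \<notin> set ks" "a = pyramids ks"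
    using flat_valleys_pyramids[OF d(2)] by blast
  have "ht b j = 0" if "valley b j" for j
    using low(2)[OF valley_first_return(2)[OF that, of a, folded d(1)], of "length a + 2"] d(1,4)
      ht_first_return(2)[OF d(2), of b j] dyck_ht_nonneg[OF d(3), of j] by simp
  then obtain qs where qs: "0 \<notin> set qs" "b = pyramids qs"
    using flat_valleys_pyramids[OF d(3)] by blast
  show ?thesis
    using that[of ks qs] ks qs d(1) by (simp add: two_level_def)
qed

lemma last_one_split:
  fixes a b :: "nat list"
  assumes "a @ [1] @ replicate j 0 = b @ [1] @ replicate k 0"
  shows "a = b" "j = k"
proof -
  have "takeWhile (\<lambda>c. c = 0) (replicate i 0 @ 1 # xs) = replicate i 0" for i and xs :: "nat list"
    by (induction i) simp_all
  then have trailing: "takeWhile (\<lambda>c. c = 0) (rev (w @ [1] @ replicate i 0)) = replicate i 0"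
    for w :: "nat list" and i
    by simp
  show "j = k"
    using trailing[of a j] trailing[of b k] assms by (metis length_replicate)
  then show "a = b"
    using assms by simp
qed

lemma last_one_decomp:
  assumes "set w \<subseteq> {0, 1}" "1 \<in> set w"
  obtains w' j where "w = w' @ [1] @ replicate j 0"
  using assms
proof (induction w arbitrary: thesis rule: rev_induct)
  case (snoc c w)
  show ?case
  proof (cases "c = 1")
    case True
    then show ?thesis
      using snoc.prems(1)[of w 0] by simp
  next
    case False
    then have "c = 0" "1 \<in> set w" "set w \<subseteq> {0, 1}"
      using snoc.prems(2,3) by auto
    then obtain w' j where "w = w' @ [1] @ replicate j 0"
      using snoc.IH by blast
    then show ?thesis
      using snoc.prems(1)[of w' "Suc j"] \<open>c = 0\<close> by (simp add: replicate_append_same)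
  qed
qed simp

lemma last_ascent_singleD:
  assumes "last_ascent_single (v @ replicate c 1 @ [1] @ replicate j 0)"
  shows "c = 0"
proof -
  obtain a k where a: "v @ replicate c 1 @ [1] @ replicate j 0 = a @ [1] @ replicate k 0" "last a = 0"
    using assms by (auto simp: last_ascent_single_def)
  then have "a = v @ replicate c 1"
    using last_one_split(1)[of "v @ replicate c 1" j a k] by simp
  then show ?thesis
    using a(2) by (cases c) (simp_all add: last_append split: if_splits)
qed

lemma last_ascent_single_two_level:
  assumes "ks \<noteq> []" "0 \<notin> set (ks @ qs)" "last_ascent_single (two_level ks qs)"
  shows "last (ks @ qs) = 1"
proof -
  obtain zs z where z: "ks @ qs = zs @ [z]" "0 < z"
    using assms(1,2) by (metis Nil_is_append_conv in_set_conv_decomp neq0_conv rev_exhaust)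
  have "\<exists>v j. two_level ks qs = v @ replicate (z - 1) 1 @ [1] @ replicate j 0"
  proof (cases "qs = []")
    case True
    then have "two_level ks qs = ([1] @ pyramids zs) @ replicate (z - 1) 1 @ [1] @ replicate (Suc z) 0"
      using z by (cases z) (simp_all add: two_level_def pyramid_def replicate_append_same)
    then show ?thesis
      by blast
  next
    case False
    then obtain qs' where "qs = qs' @ [z]"
      using z(1) by (metis append1_eq_conv append_assoc rev_exhaust)
    then have "two_level ks qs = ([1] @ pyramids ks @ [0] @ pyramids qs') @ replicate (z - 1) 1 @ [1] @ replicate z 0"
      using z by (cases z) (simp_all add: two_level_def pyramid_def replicate_append_same)
    then show ?thesis
      by blast
  qed
  then have "z - 1 = 0"
    using assms(3) last_ascent_singleD by metis
  then show ?thesis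
    using z by simp
qed

lemma last_ascent_single_top: "1 \<le> n \<Longrightarrow> last_ascent_single (two_level [n, 1] [])"
  unfolding last_ascent_single_def two_level_def
  by (rule exI[of _ "[1] @ pyramid n"], rule exI[of _ 2]) (simp add: pyramid_def numeral_2_eq_2)

section \<open>Dexter moves between two-level paths\<close>

lemma dexter_coverI:
  assumes "dyck (p @ [1] @ replicate (\<alpha> + \<beta>) 0 @ x @ s)" "primitive x" "0 < \<beta>"
    "s = [] \<or> hd s = 1"
  shows "dexter_cover (p @ [1] @ replicate (\<alpha> + \<beta>) 0 @ x @ s) (p @ [1] @ replicate \<alpha> 0 @ x @ replicate \<beta> 0 @ s)"
  unfolding dexter_cover_def using assms by blast

lemma dexter_coverE:
  assumes "dexter_cover d d'"
  obtains p x s \<alpha> \<beta> where "dyck (p @ [1] @ replicate (\<alpha> + \<beta>) 0 @ x @ s)" "primitive x"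
    "0 < \<alpha> + \<beta>" "0 < \<beta>" "s = [] \<or> hd s = 1"
    "d = p @ [1] @ replicate (\<alpha> + \<beta>) 0 @ x @ s" "d' = p @ [1] @ replicate \<alpha> 0 @ x @ replicate \<beta> 0 @ s"
proof -
  obtain p x s m \<alpha> \<beta> where "dyck d \<and> primitive x \<and> m > 0 \<and> (s = [] \<or> hd s = 1) \<and>
      d = p @ [1] @ replicate m 0 @ x @ s \<and> \<alpha> + \<beta> = m \<and> \<beta> > 0 \<and>
      d' = p @ [1] @ replicate \<alpha> 0 @ x @ replicate \<beta> 0 @ s"
    using assms unfolding dexter_cover_def by (elim conjE exE) blast
  then show ?thesis
    by (intro that[of p \<alpha> \<beta> x s]) auto
qed

lemma dexter_cover_merge:
  assumes "dyck (p @ pyramid (Suc a) @ replicate z 0 @ pyramid b @ s)" "s = [] \<or> hd s = 1"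
  shows "dexter_cover (p @ pyramid (Suc a) @ replicate z 0 @ pyramid b @ s)
    (p @ pyramid (Suc a + b) @ replicate z 0 @ s)"
proof -
  have before: "p @ pyramid (Suc a) @ replicate z 0 @ pyramid b @ s
      = (p @ replicate a 1) @ [1] @ replicate (0 + Suc (a + z)) 0 @ pyramid b @ s"
    by (simp add: pyramid_def replicate_app_Cons_same replicate_add)
  have "replicate a c @ replicate b c = replicate b c @ replicate a c" for c :: nat
    by (simp add: add.commute flip: replicate_add)
  then have after: "p @ pyramid (Suc a + b) @ replicate z 0 @ s
      = (p @ replicate a 1) @ [1] @ replicate 0 0 @ pyramid b @ replicate (Suc (a + z)) 0 @ s"
    by (simp add: pyramid_def replicate_app_Cons_same replicate_add)
  show ?thesis
    unfolding before after
    by (rule dexter_coverI[OF assms(1)[unfolded before] primitive_pyramid]) (use assms(2) in auto)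
qed

lemma dexter_cover_shift:
  assumes "dyck (p @ pyramid (Suc a) @ [0] @ pyramid b @ s)" "s = [] \<or> hd s = 1"
  shows "dexter_cover (p @ pyramid (Suc a) @ [0] @ pyramid b @ s) (p @ pyramid (Suc a) @ pyramid b @ [0] @ s)"
proof -
  have before: "p @ pyramid (Suc a) @ [0] @ pyramid b @ s
      = (p @ replicate a 1) @ [1] @ replicate (Suc a + 1) 0 @ pyramid b @ s"
    by (simp add: pyramid_def replicate_app_Cons_same replicate_add)
  have after: "p @ pyramid (Suc a) @ pyramid b @ [0] @ s
      = (p @ replicate a 1) @ [1] @ replicate (Suc a) 0 @ pyramid b @ replicate 1 0 @ s"
    by (simp add: pyramid_def replicate_app_Cons_same replicate_add)
  show ?thesis
    unfolding before after
    by (rule dexter_coverI[OF assms(1)[unfolded before] primitive_pyramid]) (use assms(2) in auto)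
qed

lemma dexter_le_refl [simp]: "dexter_le d d"
  by (simp add: dexter_le_def)

lemma dexter_le_cover_trans: "dexter_cover a b \<Longrightarrow> dexter_le b c \<Longrightarrow> dexter_le a c"
  unfolding dexter_le_def by (rule converse_rtranclp_into_rtranclp)

lemma dexter_le_trans [trans]: "dexter_le a b \<Longrightarrow> dexter_le b c \<Longrightarrow> dexter_le a c"
  unfolding dexter_le_def by (rule rtranclp_trans)

lemma dexter_le_merge_across:
  "0 < a \<Longrightarrow> dexter_le (two_level (ks @ [a]) (bs @ qs)) (two_level (ks @ [a + sum_list bs]) qs)"
proof (induction bs arbitrary: a)
  case (Cons b bs)
  obtain a' where a: "a = Suc a'"
    using Cons.prems by (cases a) auto
  have "dexter_cover (two_level (ks @ [a]) (b # bs @ qs)) (two_level (ks @ [a + b]) (bs @ qs))"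
    using dexter_cover_merge[of "[1] @ pyramids ks" a' 1 b "pyramids (bs @ qs)"]
      dyck_two_level[of "ks @ [a]" "b # bs @ qs"] pyramids_hd[of "bs @ qs"]
    by (simp add: two_level_def a)
  then show ?case
    using Cons.IH[of "a + b"] Cons.prems by (simp add: dexter_le_cover_trans add.assoc)
qed simp

lemma dexter_le_merge_ground:
  "0 < a \<Longrightarrow> dexter_le (two_level ks (qs @ [a] @ bs @ rs)) (two_level ks (qs @ [a + sum_list bs] @ rs))"
proof (induction bs arbitrary: a)
  case (Cons b bs)
  obtain a' where a: "a = Suc a'"
    using Cons.prems by (cases a) auto
  have "dexter_cover (two_level ks (qs @ [a, b] @ bs @ rs)) (two_level ks (qs @ [a + b] @ bs @ rs))"
    using dexter_cover_merge[of "[1] @ pyramids ks @ [0] @ pyramids qs" a' 0 b "pyramids (bs @ rs)"]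
      dyck_two_level[of ks "qs @ [a, b] @ bs @ rs"] pyramids_hd[of "bs @ rs"]
    by (simp add: two_level_def a)
  then show ?case
    using Cons.IH[of "a + b"] Cons.prems by (simp add: dexter_le_cover_trans add.assoc)
qed simp

lemma dexter_le_merge_plateau:
  assumes "0 < a" "0 < c"
  shows "dexter_le (two_level (ks @ [a] @ bs @ c # cs) qs) (two_level (ks @ [a + sum_list bs] @ c # cs) qs)"
  using assms(1)
proof (induction bs arbitrary: a)
  case (Cons b bs)
  obtain a' where a: "a = Suc a'"
    using Cons.prems by (cases a) auto
  have "pyramids (bs @ c # cs) \<noteq> []"
    using assms(2) by (simp add: pyramid_def)
  then have "hd (pyramids (bs @ c # cs) @ [0] @ pyramids qs) = 1"
    using pyramids_hd[of "bs @ c # cs"] by (simp del: pyramids_simps)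
  then have "dexter_cover (two_level (ks @ [a, b] @ bs @ c # cs) qs) (two_level (ks @ [a + b] @ bs @ c # cs) qs)"
    using dexter_cover_merge[of "[1] @ pyramids ks" a' 0 b "pyramids (bs @ c # cs) @ [0] @ pyramids qs"]
      dyck_two_level[of "ks @ [a, b] @ bs @ c # cs" qs]
    by (simp add: two_level_def a)
  then show ?case
    using Cons.IH[of "a + b"] Cons.prems by (simp add: dexter_le_cover_trans add.assoc)
qed simp

lemma dexter_le_shift:
  "0 \<notin> set (a # bs) \<Longrightarrow> dexter_le (two_level (ks @ [a]) (bs @ qs)) (two_level (ks @ a # bs) qs)"
proof (induction bs arbitrary: ks a)
  case (Cons b bs)
  obtain a' where a: "a = Suc a'"
    using Cons.prems by (cases a) auto
  have "dexter_cover (two_level (ks @ [a]) (b # bs @ qs)) (two_level (ks @ [a, b]) (bs @ qs))"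
    using dexter_cover_shift[of "[1] @ pyramids ks" a' b "pyramids (bs @ qs)"]
      dyck_two_level[of "ks @ [a]" "b # bs @ qs"] pyramids_hd[of "bs @ qs"]
    by (simp add: two_level_def a)
  then show ?case
    using Cons.IH[where ks = "ks @ [a]" and a = b] Cons.prems by (simp add: dexter_le_cover_trans)
qed simp

lemma dexter_le_group_plateau:
  "0 \<notin> set (a # ys) \<Longrightarrow>
    dexter_le (two_level (ks @ [a]) (replicate (sum_list ys) 1 @ qs)) (two_level (ks @ a # ys) qs)"
proof (induction ys arbitrary: ks a)
  case (Cons y ys)
  have "replicate (sum_list (y # ys)) 1 @ qs = [1] @ replicate (y - 1) 1 @ replicate (sum_list ys) 1 @ qs"
    using Cons.prems by (cases y) (simp_all add: replicate_add)
  moreover have "dexter_le (two_level (ks @ [a]) ([1] @ replicate (y - 1) 1 @ replicate (sum_list ys) 1 @ qs))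
      (two_level (ks @ [a, 1]) (replicate (y - 1) 1 @ replicate (sum_list ys) 1 @ qs))"
    using dexter_le_shift[of a "[1]" ks] Cons.prems by simp
  moreover have "dexter_le (two_level ((ks @ [a]) @ [1]) (replicate (y - 1) 1 @ replicate (sum_list ys) 1 @ qs))
      (two_level ((ks @ [a]) @ [y]) (replicate (sum_list ys) 1 @ qs))"
    using dexter_le_merge_across[of 1 "ks @ [a]" "replicate (y - 1) 1"] Cons.prems
    by (simp add: sum_list_replicate)
  ultimately show ?case
    using Cons.IH[where ks = "ks @ [a]" and a = y] Cons.prems by (auto intro: dexter_le_trans)
qed simp

lemma dexter_le_group_ground:
  "0 \<notin> set ys \<Longrightarrow> dexter_le (two_level ks (qs @ replicate (sum_list ys) 1)) (two_level ks (qs @ ys))"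
proof (induction ys arbitrary: qs)
  case (Cons y ys)
  have "qs @ replicate (sum_list (y # ys)) 1 = qs @ [1] @ replicate (y - 1) 1 @ replicate (sum_list ys) 1"
    using Cons.prems by (cases y) (simp_all add: replicate_add)
  moreover have "dexter_le (two_level ks (qs @ [1] @ replicate (y - 1) 1 @ replicate (sum_list ys) 1))
      (two_level ks ((qs @ [y]) @ replicate (sum_list ys) 1))"
    using dexter_le_merge_ground[of 1 ks qs "replicate (y - 1) 1"] Cons.prems
    by (simp add: sum_list_replicate)
  ultimately show ?case
    using Cons.IH[of "qs @ [y]"] Cons.prems by (auto intro: dexter_le_trans)
qed simp

lemma F_bottom_eq: "[1, 1, 0, 0] @ concat (replicate n [1, 0]) = two_level [1] (replicate n 1)"
  by (induction n) (simp_all add: two_level_def pyramid_def)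

lemma F_top_eq: "[1] @ replicate n 1 @ replicate n 0 @ [1, 0, 0] = two_level [n, 1] []"
  by (simp add: two_level_def pyramid_def)

lemma dexter_le_from_bottom:
  assumes "0 \<notin> set (k # ks @ qs)" "sum_list (k # ks @ qs) = n + 1"
  shows "dexter_le (two_level [1] (replicate n 1)) (two_level (k # ks) qs)"
proof -
  have "replicate n 1 = replicate (k - 1) 1 @ replicate (sum_list ks) 1 @ replicate (sum_list qs) (1::nat)"
    using assms by (simp flip: replicate_add)
  then have "dexter_le (two_level [1] (replicate n 1)) (two_level [k] (replicate (sum_list ks) 1 @ replicate (sum_list qs) 1))"
    using dexter_le_merge_across[of 1 "[]" "replicate (k - 1) 1"] assms(1) by (simp add: sum_list_replicate)
  also have "dexter_le \<dots> (two_level (k # ks) (replicate (sum_list qs) 1))"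
    using dexter_le_group_plateau[of k ks "[]"] assms(1) by simp
  also have "dexter_le \<dots> (two_level (k # ks) qs)"
    using dexter_le_group_ground[of qs "k # ks" "[]"] assms(1) by simp
  finally show ?thesis .
qed

definition admissible :: "nat list \<Rightarrow> nat list \<Rightarrow> bool" where
  "admissible ks qs \<longleftrightarrow> ks \<noteq> [] \<and> 0 \<notin> set (ks @ qs) \<and> last (ks @ qs) = 1"

lemma dexter_le_to_top:
  assumes "admissible ks qs" "sum_list (ks @ qs) = n + 1" "1 \<le> n"
  shows "dexter_le (two_level ks qs) (two_level [n, 1] [])"
proof -
  have adm: "ks \<noteq> []" "0 \<notin> set (ks @ qs)" "last (ks @ qs) = 1"
    using assms(1) by (simp_all add: admissible_def)
  obtain ks' a where "ks = ks' @ [a]"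
    using adm(1) by (metis rev_exhaust)
  then have "dexter_le (two_level ks qs) (two_level (ks @ qs) [])"
    using dexter_le_shift[of a qs ks' "[]"] adm(2) by simp
  moreover obtain zs where zs: "ks @ qs = zs @ [1]"
    using adm(1,3) by (metis append_butlast_last_id append_is_Nil_conv)
  moreover obtain b rest where "zs = b # rest"
    using zs assms(2,3) by (cases zs) auto
  moreover have "dexter_le (two_level ([] @ [b] @ rest @ [1]) []) (two_level ([] @ [b + sum_list rest] @ [1]) [])"
    using dexter_le_merge_plateau[of b 1 "[]" rest "[]" "[]"] adm(2) zs \<open>zs = b # rest\<close> by simp
  ultimately show ?thesis
    using assms(2) by (auto intro: dexter_le_trans)
qed

lemma two_level_in_F:
  assumes "admissible ks qs" "sum_list (ks @ qs) = n + 1" "1 \<le> n"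
  shows "two_level ks qs \<in> F n"
proof -
  obtain k ks' where "ks = k # ks'"
    using assms(1) by (cases ks) (auto simp: admissible_def)
  then have "dexter_le (two_level [1] (replicate n 1)) (two_level ks qs)"
    using dexter_le_from_bottom[of k ks' qs n] assms by (simp add: admissible_def)
  moreover have "length (two_level ks qs) = 2 * (n + 2)"
    using assms(2) by (simp add: two_level_def length_pyramids)
  ultimately show ?thesis
    using dexter_le_to_top[OF assms] dyck_two_level unfolding F_def F_bottom_eq F_top_eq by blast
qed

section \<open>Invariants of the dexter order\<close>

lemma dexter_cover_take_2:
  assumes "dexter_cover d d'" "take 2 d = [1, 1]"
  shows "take 2 d' = [1, 1]"
  using assms(1)
proof (cases rule: dexter_coverE)
  case (1 p x s \<alpha> \<beta>)
  have "p \<noteq> []"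
    using 1 assms(2) by (cases "\<alpha> + \<beta>") auto
  then have "take 2 (p @ [1] @ w) = take 2 (p @ [1])" for w
    by (cases p) (simp_all add: numeral_2_eq_2 take_Cons')
  then show ?thesis
    using assms(2) by (simp only: 1(6,7))
qed

lemma dexter_le_take_2: "dexter_le d d' \<Longrightarrow> take 2 d = [1, 1] \<Longrightarrow> take 2 d' = [1, 1]"
  unfolding dexter_le_def by (induction rule: rtranclp_induct) (auto dest: dexter_cover_take_2)

text \<open>The rearranged block \<open>0\<^sup>\<alpha>\<^sup>+\<^sup>\<beta> x\<close> occupies the positions from \<open>lo\<close> to \<open>hi\<close>;
  outside them the paths before and after the move agree letterwise and in height.\<close>

locale dexter_move =
  fixes p x s :: "nat list" and \<alpha> \<beta> :: nat
  assumes dyck_move: "dyck (p @ [1] @ replicate (\<alpha> + \<beta>) 0 @ x @ s)"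
    and primitive_x: "primitive x"
    and x_nonempty: "x \<noteq> []"
    and \<beta>_pos: "0 < \<beta>"
    and s_start: "s = [] \<or> hd s = 1"
begin

definition before :: "nat list" where
  "before = p @ [1] @ replicate (\<alpha> + \<beta>) 0 @ x @ s"

definition after :: "nat list" where
  "after = p @ [1] @ replicate \<alpha> 0 @ x @ replicate \<beta> 0 @ s"

abbreviation lo :: nat where
  "lo \<equiv> Suc (length p)"

abbreviation hi :: nat where
  "hi \<equiv> lo + \<alpha> + \<beta> + length x"

lemma dyck_x: "dyck x"
  using primitive_x by (simp add: primitive_def)

lemma dyck_before: "dyck before"
  using dyck_move by (simp add: before_def)

lemma length_before: "length before = hi + length s"
  by (simp add: before_def)

lemma length_after: "length after = length before"
  by (simp add: before_def after_def)

lemma ht_before: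
  "ht before k = ht (p @ [1]) k - int (min (k - lo) (\<alpha> + \<beta>)) + ht x (k - lo - (\<alpha> + \<beta>)) + ht s (k - hi)"
  unfolding before_def by (simp add: ht_append algebra_simps)

lemma ht_after:
  "ht after k = ht (p @ [1]) k - int (min (k - lo) \<alpha>) + ht x (k - lo - \<alpha>)
    - int (min (k - lo - \<alpha> - length x) \<beta>) + ht s (k - hi)"
  unfolding after_def by (simp add: ht_append algebra_simps)

lemma ht_prefix: "lo \<le> k \<Longrightarrow> ht (p @ [1]) k = ht before lo"
  using ht_length_le[of "p @ [1]" k] ht_before[of lo] by simp

lemma ht_outside: "k \<le> lo \<or> hi \<le> k \<Longrightarrow> ht before k = ht after k"
  using dyck_ht_end[OF dyck_x] by (auto simp: ht_before ht_after)

lemma ht_hi: "ht before hi = ht before lo - int (\<alpha> + \<beta>)"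
  using ht_prefix[of hi] dyck_ht_end[OF dyck_x] by (simp add: ht_before)

lemma ht_hi_le: "lo \<le> k \<Longrightarrow> k \<le> hi \<Longrightarrow> ht before hi \<le> ht before k"
  using ht_prefix[of k] ht_hi dyck_ht_nonneg[OF dyck_x, of "k - lo - (\<alpha> + \<beta>)"]
    min.cobounded2[of "k - lo" "\<alpha> + \<beta>"]
  by (simp add: ht_before)

lemma ht_inner:
  assumes "lo + \<alpha> + \<beta> < k" "k < hi"
  shows "ht before hi < ht before k" "ht after (k - \<beta>) = ht before k + int \<beta>"
proof -
  have "0 < ht x (k - lo - (\<alpha> + \<beta>))"
    using assms primitive_ht_pos[OF primitive_x] by simp
  then show "ht before hi < ht before k"
    using assms ht_prefix[of k] ht_hi by (simp add: ht_before)
  have "k - \<beta> - lo - \<alpha> = k - lo - (\<alpha> + \<beta>)"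
    by simp
  then show "ht after (k - \<beta>) = ht before k + int \<beta>"
    using assms ht_prefix[of k] ht_prefix[of "k - \<beta>"] by (simp add: ht_before ht_after)
qed

lemma nth_outside: "k < lo \<or> hi \<le> k \<Longrightarrow> before ! k = after ! k"
  unfolding before_def after_def by (auto simp: nth_append nth_Cons' add_ac)

lemma nth_zeros: "lo \<le> k \<Longrightarrow> k < lo + \<alpha> + \<beta> \<Longrightarrow> before ! k = 0"
  unfolding before_def by (auto simp: nth_append nth_Cons')

lemma nth_inner:
  assumes "lo + \<alpha> + \<beta> \<le> k" "k < hi"
  shows "before ! k = x ! (k - lo - (\<alpha> + \<beta>))" "after ! (k - \<beta>) = x ! (k - lo - (\<alpha> + \<beta>))"
  using assms unfolding before_def after_def by (auto simp: nth_append nth_Cons' add_ac)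

lemma valley_after_hi: "s \<noteq> [] \<Longrightarrow> valley after hi"
  using \<beta>_pos s_start unfolding valley_def after_def
  by (auto simp: nth_append nth_Cons' hd_conv_nth)

lemma valley_outside:
  assumes "valley before j" "j < lo \<or> hi < j"
  shows "valley after j"
proof -
  have idx: "j - 1 < lo \<or> hi \<le> j - 1" "j < lo \<or> hi \<le> j"
    using assms by (auto simp: valley_def)
  show ?thesis
    using assms(1) nth_outside[OF idx(1)] nth_outside[OF idx(2)] length_after by (simp add: valley_def)
qed

lemma valley_inner:
  assumes "valley before j" "lo + \<alpha> + \<beta> < j" "j < hi"
  shows "valley after (j - \<beta>)"
proof -
  have "after ! (j - \<beta> - 1) = 0" "after ! (j - \<beta>) = 1"
    using assms nth_inner[of j] nth_inner[of "j - 1"] by (simp_all add: valley_def diff_commute[of j 1])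
  then show ?thesis
    using assms length_after length_before by (simp add: valley_def)
qed

lemma valley_before_cases:
  assumes "valley before j"
  obtains (left) "j < lo" "valley after j"
    | (boundary) "j \<le> hi" "ht before j = ht before hi"
    | (inner) "lo + \<alpha> + \<beta> < j" "j < hi" "valley after (j - \<beta>)"
    | (right) "hi < j" "valley after j"
proof -
  consider "j < lo" | "lo \<le> j" "j < lo + \<alpha> + \<beta>" | "j = lo + \<alpha> + \<beta>"
    | "lo + \<alpha> + \<beta> < j" "j < hi" | "j = hi" | "hi < j"
    by linarith
  then show ?thesis
  proof cases
    case 1
    then show ?thesis
      using that(1) valley_outside[OF assms] by simp
  next
    case 2
    then show ?thesis
      using assms nth_zeros by (simp add: valley_def)
  next
    case 3
    then show ?thesis
      using that(2) ht_prefix[of j] ht_hi by (simp add: ht_before)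
  next
    case 4
    then show ?thesis
      using that(3) valley_inner[OF assms] by simp
  next
    case 5
    then show ?thesis
      using that(2) by simp
  next
    case 6
    then show ?thesis
      using that(4) valley_outside[OF assms] by simp
  qed
qed

lemma low_valleys_hi:
  assumes "low_valleys after"
  shows "ht before hi \<le> 1" "0 < k \<Longrightarrow> k \<le> hi \<Longrightarrow> ht before hi \<le> ht before k"
proof -
  have "ht before hi \<le> 1 \<and> (\<forall>k. 0 < k \<and> k \<le> hi \<longrightarrow> ht before hi \<le> ht before k)"
  proof (cases "s = []")
    case True
    then have "ht before hi = 0"
      using dyck_ht_end[OF dyck_before] length_before by simp
    then show ?thesis
      using dyck_ht_nonneg[OF dyck_before] by simp
  next
    case False
    then have "ht after hi \<le> 1" "\<And>k. 0 < k \<Longrightarrow> k \<le> hi \<Longrightarrow> ht after hi \<le> ht after k"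
      using assms valley_after_hi by (auto simp: low_valleys_def)
    moreover have "ht after hi \<le> ht before k" if "0 < k" "k \<le> hi" for k
      using calculation(2)[OF that] ht_outside[of k] ht_outside[of hi] ht_hi_le[of k] that
      by (cases "k \<le> lo") auto
    ultimately show ?thesis
      using ht_outside[of hi] by simp
  qed
  then show "ht before hi \<le> 1" "0 < k \<Longrightarrow> k \<le> hi \<Longrightarrow> ht before hi \<le> ht before k"
    by simp_all
qed

lemma low_valleys_right:
  assumes "low_valleys after" "valley after j" "hi < j" "0 < k" "k \<le> j"
  shows "ht before j \<le> ht before k"
proof -
  have low: "ht after j \<le> ht after i" if "0 < i" "i \<le> j" for i
    using assms(1,2) that by (auto simp: low_valleys_def)
  show ?thesis
  proof (cases "lo < k \<and> k < hi")
    case True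
    then show ?thesis
      using low[of hi] ht_outside[of hi] ht_outside[of j] assms(3) ht_hi_le[of k] by simp
  next
    case False
    then show ?thesis
      using low[of k] ht_outside[of k] ht_outside[of j] assms(3-5) by auto
  qed
qed

lemma low_valleys_back:
  assumes "low_valleys after"
  shows "low_valleys before"
  unfolding low_valleys_def
proof (intro allI impI)
  fix j
  assume "valley before j"
  have low: "ht after i \<le> 1" "\<And>k. 0 < k \<Longrightarrow> k \<le> i \<Longrightarrow> ht after i \<le> ht after k"
    if "valley after i" for i
    using assms that by (auto simp: low_valleys_def)
  from \<open>valley before j\<close> show "ht before j \<le> 1 \<and> (\<forall>k. 0 < k \<and> k \<le> j \<longrightarrow> ht before j \<le> ht before k)"
  proof (cases rule: valley_before_cases)
    case left
    then show ?thesis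
      using low[OF left(2)] ht_outside by auto
  next
    case boundary
    then show ?thesis
      using low_valleys_hi[OF assms] by auto
  next
    case inner
    then have "ht before hi + int \<beta> < ht after (j - \<beta>)"
      using ht_inner by simp
    then show ?thesis
      using low(1)[OF inner(3)] dyck_ht_nonneg[OF dyck_before, of hi] \<beta>_pos by simp
  next
    case right
    then show ?thesis
      using low(1)[OF right(2)] ht_outside[of j] low_valleys_right[OF assms right(2,1)] by simp
  qed
qed

lemma last_ascent_single_after:
  assumes "last_ascent_single after"
  obtains a k where "p @ [1] @ replicate \<alpha> 0 @ x @ replicate \<beta> 0 @ s = a @ [1] @ replicate k 0"
    "last a = 0"
  using assms that by (auto simp: last_ascent_single_def after_def)

lemma last_ascent_single_back_in_s:
  assumes "last_ascent_single after" "s \<noteq> []"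
  shows "last_ascent_single before"
proof -
  obtain a k where a: "p @ [1] @ replicate \<alpha> 0 @ x @ replicate \<beta> 0 @ s = a @ [1] @ replicate k 0"
    "last a = 0"
    using last_ascent_single_after[OF assms(1)] .
  have "1 \<in> set s" "set s \<subseteq> {0, 1}"
    using assms(2) s_start hd_in_set dyck_before by (fastforce simp: before_def dyck_iff_ht)+
  then obtain s' j where s': "s = s' @ [1] @ replicate j 0"
    using last_one_decomp by blast
  then have "a = p @ [1] @ replicate \<alpha> 0 @ x @ replicate \<beta> 0 @ s'"
    using a(1) last_one_split(1)[of "p @ [1] @ replicate \<alpha> 0 @ x @ replicate \<beta> 0 @ s'" j a k]
    by simp
  then have "last (p @ [1] @ replicate (\<alpha> + \<beta>) 0 @ x @ s') = 0"
    using a(2) dyck_last[OF dyck_x x_nonempty] x_nonempty by (cases "s' = []") (simp_all add: last_append)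
  moreover have "before = (p @ [1] @ replicate (\<alpha> + \<beta>) 0 @ x @ s') @ [1] @ replicate j 0"
    unfolding before_def using s' by simp
  ultimately show ?thesis
    unfolding last_ascent_single_def by blast
qed

lemma last_ascent_single_back_in_x:
  assumes "last_ascent_single after" "s = []"
  shows "last_ascent_single before"
proof -
  obtain a k where a: "p @ [1] @ replicate \<alpha> 0 @ x @ replicate \<beta> 0 @ s = a @ [1] @ replicate k 0"
    "last a = 0"
    using last_ascent_single_after[OF assms(1)] .
  have "1 \<in> set x" "set x \<subseteq> {0, 1}"
    using dyck_hd[OF dyck_x x_nonempty] x_nonempty hd_in_set dyck_x by (fastforce simp: dyck_iff_ht)+
  then obtain x' j where x': "x = x' @ [1] @ replicate j 0"
    using last_one_decomp by blast
  then have "a = p @ [1] @ replicate \<alpha> 0 @ x'"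
    using a(1) assms(2) last_one_split(1)[of "p @ [1] @ replicate \<alpha> 0 @ x'" "j + \<beta>" a k]
    by (simp add: replicate_add)
  then have "last (p @ [1] @ replicate (\<alpha> + \<beta>) 0 @ x') = 0"
    using a(2) \<beta>_pos by (cases "x' = []") simp_all
  moreover have "before = (p @ [1] @ replicate (\<alpha> + \<beta>) 0 @ x') @ [1] @ replicate j 0"
    unfolding before_def using x' assms(2) by simp
  ultimately show ?thesis
    unfolding last_ascent_single_def by blast
qed

lemma last_ascent_single_back: "last_ascent_single after \<Longrightarrow> last_ascent_single before"
  using last_ascent_single_back_in_s last_ascent_single_back_in_x by blast

end

lemma dexter_cover_back:
  assumes "dexter_cover d d'" "low_valleys d'" "last_ascent_single d'"
  shows "low_valleys d \<and> last_ascent_single d"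
  using assms(1)
proof (cases rule: dexter_coverE)
  case (1 p x s \<alpha> \<beta>)
  show ?thesis
  proof (cases "x = []")
    case True
    then have "d = d'"
      using 1 by (simp add: replicate_add)
    then show ?thesis
      using assms(2,3) by simp
  next
    case False
    then interpret dexter_move p x s \<alpha> \<beta>
      using 1 by unfold_locales
    show ?thesis
      using low_valleys_back last_ascent_single_back assms(2,3) 1
      by (simp add: before_def after_def)
  qed
qed

lemma dexter_le_back:
  assumes "dexter_le d d'" "low_valleys d'" "last_ascent_single d'"
  shows "low_valleys d \<and> last_ascent_single d"
  using assms unfolding dexter_le_def
  by (induction rule: converse_rtranclp_induct) (auto dest: dexter_cover_back)

lemma F_imp_two_level:
  assumes "d \<in> F n" "1 \<le> n"
  obtains ks qs where "admissible ks qs" "sum_list (ks @ qs) = n + 1" "d = two_level ks qs"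
proof -
  have d: "dyck d" "length d = 2 * (n + 2)" "dexter_le (two_level [1] (replicate n 1)) d"
    "dexter_le d (two_level [n, 1] [])"
    using assms(1) unfolding F_def F_bottom_eq F_top_eq by auto
  have low: "low_valleys d" "last_ascent_single d"
    using dexter_le_back[OF d(4) low_valleys_two_level last_ascent_single_top[OF assms(2)]] by simp_all
  moreover have "d \<noteq> []"
    using d(2) by auto
  ultimately obtain ks qs where ks_qs: "0 \<notin> set (ks @ qs)" "d = two_level ks qs"
    using low_valleys_imp_two_level[OF d(1)] by blast
  have "take 2 (two_level ks qs) = [1, 1]"
    using dexter_le_take_2[OF d(3)] ks_qs(2) by (simp add: two_level_def pyramid_def)
  then have "ks \<noteq> []"
    by (auto simp: two_level_def numeral_2_eq_2)
  then have "admissible ks qs"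
    using last_ascent_single_two_level ks_qs low(2) by (auto simp: admissible_def)
  moreover have "sum_list (ks @ qs) = n + 1"
    using d(2) ks_qs(2) by (simp add: two_level_def length_pyramids)
  ultimately show ?thesis
    using that ks_qs(2) by blast
qed

lemma F_eq:
  assumes "1 \<le> n"
  shows "F n = {two_level ks qs | ks qs. admissible ks qs \<and> sum_list (ks @ qs) = n + 1}"
  using F_imp_two_level[OF _ assms] two_level_in_F[OF _ _ assms] by blast

section \<open>The map rho on two-level paths\<close>

text \<open>\<^const>\<open>rho\<close> as a scan over the letters, with state (pending number of 2s, output,
  number of 1s read, number of 0s read, previous letter); it agrees with \<^const>\<open>rho\<close> once
  the first two letters are read (lemma \<open>rho_Cons_Cons\<close>).\<close>

fun rho_scan :: "nat \<times> nat list \<times> nat \<times> nat \<times> nat \<Rightarrow> nat \<Rightarrow> nat \<times> nat list \<times> nat \<times> nat \<times> nat" where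
  "rho_scan (N, u, a, b, p) c =
    (if p = 0 \<and> c = 1 then (0, u @ [a - b] @ replicate N 2, Suc a, b, c)
     else (if p = 1 \<and> c = 1 then Suc N else N, u, if c = 1 then Suc a else a, if c = 0 then Suc b else b, c))"

lemma foldl_rho_step:
  assumes "2 \<le> i" "i \<le> length d"
  shows "foldl (rho_step d) (N, u) [i..<length d] =
    (\<lambda>(N', u', _). (N', u')) (foldl rho_scan (N, u, count_list (take i d) 1, count_list (take i d) 0, d ! (i - 1)) (drop i d))"
  using assms
proof (induction "length d - i" arbitrary: i N u)
  case 0
  then show ?case by simp
next
  case (Suc x)
  then have i: "i < length d" by simp
  define st where "st = rho_step d (N, u) i"
  have scan: "rho_scan (N, u, count_list (take i d) 1, count_list (take i d) 0, d ! (i - 1)) (d ! i)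
    = (fst st, snd st, count_list (take (Suc i) d) 1, count_list (take (Suc i) d) 0, d ! (Suc i - 1))"
    unfolding st_def rho_step_def height_def using Suc.prems i by (auto simp: take_Suc_conv_app_nth)
  have "foldl (rho_step d) (N, u) [i..<length d] = foldl (rho_step d) (fst st, snd st) [Suc i..<length d]"
    using i by (simp add: upt_conv_Cons st_def)
  also have "\<dots> = (\<lambda>(N', u', _). (N', u')) (foldl rho_scan
      (fst st, snd st, count_list (take (Suc i) d) 1, count_list (take (Suc i) d) 0, d ! (Suc i - 1)) (drop (Suc i) d))"
    using Suc.hyps(2) Suc.prems i by (intro Suc.hyps(1)) auto
  also have "\<dots> = (\<lambda>(N', u', _). (N', u'))
      (foldl rho_scan (N, u, count_list (take i d) 1, count_list (take i d) 0, d ! (i - 1)) (drop i d))"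
    using i by (simp only: scan Cons_nth_drop_Suc[symmetric] foldl_Cons)
  finally show ?case .
qed

lemma rho_Cons_Cons: "rho (1 # 1 # w) = fst (snd (foldl rho_scan (0, [], 2, 0, 1) w))"
proof -
  define d where "d = 1 # 1 # w"
  have "1 < length d"
    by (simp add: d_def)
  then have "[1..<length d] = 1 # [2..<length d]"
    by (simp add: upt_conv_Cons numeral_2_eq_2)
  moreover have "rho_step d (0, []) 1 = (0, [])"
    by (simp add: rho_step_def d_def)
  moreover have "count_list (take 2 d) 1 = 2" "count_list (take 2 d) 0 = 0" "d ! (2 - 1) = 1" "drop 2 d = w"
      "2 \<le> length d"
    by (simp_all add: d_def numeral_2_eq_2)
  ultimately show ?thesis
    using foldl_rho_step[of 2 d 0 "[]"] unfolding rho_def d_def[symmetric]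
    by (simp add: case_prod_beta)
qed

definition blocks :: "nat \<Rightarrow> nat list \<Rightarrow> nat list" where
  "blocks c ts = concat (map (\<lambda>t. c # replicate t 2) ts)"

lemma blocks_simps [simp]:
  "blocks c [] = []"
  "blocks c (t # ts) = c # replicate t 2 @ blocks c ts"
  "blocks c (ts @ ts') = blocks c ts @ blocks c ts'"
  by (simp_all add: blocks_def)

lemma length_blocks: "length (blocks c ts) = length ts + sum_list ts"
  by (induction ts) simp_all

lemma set_blocks: "set (blocks c ts) \<subseteq> {c, 2}"
  by (induction ts) auto

lemma foldl_rho_scan_ones:
  "foldl rho_scan (N, u, a, b, 1) (replicate j 1) = (N + j, u, a + j, b, 1)"
  by (induction j arbitrary: N a) auto

lemma foldl_rho_scan_zeros:
  "0 < j \<Longrightarrow> foldl rho_scan (N, u, a, b, p) (replicate j 0) = (N, u, a, b + j, 0)"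
proof (induction j arbitrary: b p)
  case (Suc j)
  then show ?case
    by (cases j) simp_all
qed simp

lemma foldl_rho_scan_pyramid:
  assumes "0 < k"
  shows "foldl rho_scan (N, u, a, b, 0) (pyramid k) = (k - 1, u @ [a - b] @ replicate N 2, a + k, b + k, 0)"
proof -
  have "pyramid k = [1] @ replicate (k - 1) 1 @ replicate k 0"
    using assms by (cases k) (simp_all add: pyramid_def)
  then show ?thesis
    using assms by (simp add: foldl_rho_scan_ones[unfolded One_nat_def] foldl_rho_scan_zeros)
qed

lemma foldl_rho_scan_pyramids:
  "0 \<notin> set ks \<Longrightarrow> foldl rho_scan (N, u, a, b, 0) (pyramids ks) =
    (last (N # map (\<lambda>k. k - 1) ks), u @ blocks (a - b) (butlast (N # map (\<lambda>k. k - 1) ks)),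
     a + sum_list ks, b + sum_list ks, 0)"
proof (induction ks arbitrary: N u a b)
  case (Cons k ks)
  then show ?case
    by (simp add: foldl_rho_scan_pyramid add.assoc)
qed simp

lemma rho_two_level:
  assumes "ks \<noteq> []" "0 \<notin> set ks" "0 \<notin> set qs"
  shows "rho (two_level ks qs) = blocks 1 (butlast (map (\<lambda>k. k - 1) ks))
    @ blocks 0 (butlast (last (map (\<lambda>k. k - 1) ks) # map (\<lambda>k. k - 1) qs))"
proof -
  obtain k ks' where ks: "ks = k # ks'" "0 < k"
    using assms(1,2) by (cases ks) auto
  let ?gs = "map (\<lambda>k. k - 1)"
  let ?B = "blocks 1 (butlast (?gs ks))"
  have "two_level ks qs = 1 # 1 # ((replicate (k - 1) 1 @ replicate k 0) @ pyramids ks' @ [0] @ pyramids qs)"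
    using ks by (cases k) (simp_all add: two_level_def pyramid_def)
  then have "rho (two_level ks qs) = fst (snd (foldl rho_scan (foldl rho_scan (foldl rho_scan
      (foldl rho_scan (0, [], 2, 0, 1) (replicate (k - 1) 1 @ replicate k 0)) (pyramids ks')) [0]) (pyramids qs)))"
    by (simp only: rho_Cons_Cons foldl_append)
  also have "foldl rho_scan (0, [], 2, 0, 1) (replicate (k - 1) 1 @ replicate k 0) = (k - 1, [], k + 1, k, 0)"
    using ks by (simp add: foldl_rho_scan_ones[unfolded One_nat_def] foldl_rho_scan_zeros)
  also have "foldl rho_scan (k - 1, [], k + 1, k, 0) (pyramids ks')
      = (last (?gs ks), ?B, k + 1 + sum_list ks', k + sum_list ks', 0)"
    using foldl_rho_scan_pyramids[of ks' "k - 1" "[]" "k + 1" k] assms(2) ks by simp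
  also have "foldl rho_scan (last (?gs ks), ?B, k + 1 + sum_list ks', k + sum_list ks', 0) [0]
      = (last (?gs ks), ?B, k + 1 + sum_list ks', k + sum_list ks' + 1, 0)"
    by simp
  also have "foldl rho_scan (last (?gs ks), ?B, k + 1 + sum_list ks', k + sum_list ks' + 1, 0) (pyramids qs)
      = (last (last (?gs ks) # ?gs qs), ?B @ blocks 0 (butlast (last (?gs ks) # ?gs qs)),
         k + 1 + sum_list ks' + sum_list qs, k + sum_list ks' + 1 + sum_list qs, 0)"
    using foldl_rho_scan_pyramids[of qs] assms(3) by simp
  finally show ?thesis
    by simp
qed

lemma length_rho_two_level:
  assumes "admissible ks qs"
  shows "length (rho (two_level ks qs)) + 1 = sum_list (ks @ qs)"
proof -
  have len: "length (blocks c (map (\<lambda>k. k - 1) xs)) = sum_list xs" if "0 \<notin> set xs" for c xs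
    using that by (induction xs) (auto simp: length_blocks)
  obtain ks' k where ks: "ks = ks' @ [k]"
    using assms by (metis admissible_def rev_exhaust)
  obtain zs z where zs: "k # qs = zs @ [z]"
    by (metis rev_exhaust list.distinct(1))
  have "z = 1"
    using assms zs ks by (auto simp: admissible_def last_append split: if_splits)
  then have "map (\<lambda>k. k - 1) (k # qs) = map (\<lambda>k. k - 1) zs @ [0]"
    using zs by simp
  then have "rho (two_level ks qs) = blocks 1 (map (\<lambda>k. k - 1) ks') @ blocks 0 (map (\<lambda>k. k - 1) zs)"
    using rho_two_level[of ks qs] assms by (simp add: admissible_def ks)
  moreover have "0 \<notin> set ks'" "0 \<notin> set zs"
    using assms zs \<open>z = 1\<close> by (auto simp: admissible_def ks)
  ultimately show ?thesis
    using zs ks \<open>z = 1\<close> len[of ks'] len[of zs] by (simp add: add_ac)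
qed

lemma ex_blocks:
  assumes "set u \<subseteq> {c, 2}" "u = [] \<or> hd u = c"
  shows "\<exists>ts. u = blocks c ts"
  using assms
proof (induction u rule: rev_induct)
  case Nil
  then show ?case
    by (metis blocks_simps(1))
next
  case (snoc x v)
  show ?case
  proof (cases "v = []")
    case True
    then show ?thesis
      using snoc.prems by (intro exI[of _ "[0]"]) simp
  next
    case False
    then obtain ts where ts: "v = blocks c ts"
      using snoc by auto
    show ?thesis
    proof (cases "x = c")
      case True
      then show ?thesis
        using ts by (intro exI[of _ "ts @ [0]"]) simp
    next
      case False
      then have "x = 2"
        using snoc.prems by auto
      moreover obtain ts' t where "ts = ts' @ [t]"
        using ts \<open>v \<noteq> []\<close> by (cases ts rule: rev_cases) auto
      ultimately show ?thesis
        using ts by (intro exI[of _ "ts' @ [Suc t]"]) (simp add: replicate_append_same)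
    qed
  qed
qed

lemma blocks_in_Tr:
  assumes "length (blocks 1 as @ blocks 0 bs) = n" "1 \<le> n"
  shows "blocks 1 as @ blocks 0 bs \<in> Tr n"
proof -
  let ?A = "blocks 1 as" and ?B = "blocks 0 bs"
  have "hd (?A @ ?B) \<noteq> 2"
    using assms by (cases as; cases bs) auto
  moreover have "(?A @ ?B) ! j \<noteq> 1" if "i < j" "j < n" "(?A @ ?B) ! i = 0" for i j
  proof -
    have "i \<ge> length ?A"
    proof (rule ccontr)
      assume "\<not> i \<ge> length ?A"
      then have "?A ! i \<in> {1, 2}"
        using set_blocks[of 1 as] by (meson not_le nth_mem subsetD)
      then show False
        using that(3) \<open>\<not> i \<ge> length ?A\<close> by (simp add: nth_append)
    qed
    then have "(?A @ ?B) ! j \<in> set ?B"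
      using that assms(1) by (simp add: nth_append)
    then show ?thesis
      using set_blocks[of 0 bs] by auto
  qed
  ultimately show ?thesis
    using assms set_blocks[of 1 as] set_blocks[of 0 bs] by (auto simp: Tr_def)
qed

lemma Tr_blocksE:
  assumes "u \<in> Tr n"
  obtains as bs where "u = blocks 1 as @ blocks 0 bs"
proof -
  define A where "A = takeWhile (\<lambda>x. x \<noteq> 0) u"
  define B where "B = dropWhile (\<lambda>x. x \<noteq> 0) u"
  have u: "u = A @ B"
    by (simp add: A_def B_def)
  have su: "set u \<subseteq> {0, 1, 2}" "u \<noteq> [] \<longrightarrow> hd u \<noteq> 2" "length u = n"
    and no_1: "\<And>i j. i < j \<Longrightarrow> j < n \<Longrightarrow> u ! i = 0 \<Longrightarrow> u ! j \<noteq> 1"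
    using assms by (auto simp: Tr_def)
  have "set A \<subseteq> {1, 2}"
    using su(1) by (auto simp: A_def dest: set_takeWhileD)
  moreover have "A = [] \<or> hd A = 1"
    using su(2) \<open>set A \<subseteq> {1, 2}\<close> u by (cases A) auto
  ultimately obtain as where "A = blocks 1 as"
    using ex_blocks by blast
  have hd_B: "B = [] \<or> hd B = 0"
    unfolding B_def using hd_dropWhile[of "\<lambda>x. x \<noteq> 0" u] by blast
  have "B ! j \<in> {0, 2}" if "j < length B" for j
  proof -
    have "B ! j \<in> {0, 1, 2}"
      using that su(1) u by (metis in_set_conv_nth Un_iff set_append subsetD)
    moreover have "B \<noteq> []"
      using that by auto
    then have "u ! (length A + j) = B ! j" "u ! length A = 0"
      using hd_B u hd_conv_nth[of B] by (auto simp: nth_append)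
    moreover have "length A + j < n"
      using that u su(3) by simp
    ultimately show ?thesis
      using no_1[of "length A" "length A + j"] by (cases "j = 0") auto
  qed
  then have "set B \<subseteq> {0, 2}"
    by (metis in_set_conv_nth subsetI)
  then obtain bs where "B = blocks 0 bs"
    using ex_blocks hd_B by blast
  then show ?thesis
    using that u \<open>A = blocks 1 as\<close> by blast
qed

lemma rho_two_level_in_Tr:
  assumes "admissible ks qs" "sum_list (ks @ qs) = n + 1" "1 \<le> n"
  shows "rho (two_level ks qs) \<in> Tr n"
  using blocks_in_Tr[of _ _ n] rho_two_level[of ks qs] length_rho_two_level[OF assms(1)] assms
  by (simp add: admissible_def)

lemma ex_rho_two_level_eq_blocks:
  "\<exists>ks qs. admissible ks qs \<and> rho (two_level ks qs) = blocks 1 as @ blocks 0 bs"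
proof -
  define zs where "zs = map Suc bs @ [1]"
  define ks where "ks = map Suc as @ [hd zs]"
  have zs: "hd zs # tl zs = zs" "0 \<notin> set zs" "last zs = 1" "0 < hd zs" "0 \<notin> set (tl zs)"
    by (cases bs; simp add: zs_def)+
  have "ks @ tl zs = map Suc as @ zs"
    using zs(1) by (simp add: ks_def)
  then have "admissible ks (tl zs)"
    using zs by (auto simp: admissible_def ks_def zs_def)
  moreover have "(hd zs - 1) # map (\<lambda>k. k - 1) (tl zs) = bs @ [0]"
    using zs(1) list.map(2)[of "\<lambda>k. k - 1" "hd zs" "tl zs"] by (simp add: zs_def o_def)
  then have "rho (two_level ks (tl zs)) = blocks 1 as @ blocks 0 bs"
    using rho_two_level[of ks "tl zs"] zs by (simp add: ks_def o_def)
  ultimately show ?thesis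
    by blast
qed

theorem lemma1p2:
  fixes n :: nat
  assumes "n \<ge> 1"
  shows "rho ` F n = Tr n"
proof
  show "rho ` F n \<subseteq> Tr n"
    using rho_two_level_in_Tr assms by (auto simp: F_eq[OF assms])
  show "Tr n \<subseteq> rho ` F n"
  proof
    fix u
    assume u: "u \<in> Tr n"
    then obtain as bs where "u = blocks 1 as @ blocks 0 bs"
      by (rule Tr_blocksE)
    then obtain ks qs where ks_qs: "admissible ks qs" "rho (two_level ks qs) = u"
      using ex_rho_two_level_eq_blocks by blast
    moreover have "sum_list (ks @ qs) = n + 1"
      using length_rho_two_level[OF ks_qs(1)] ks_qs(2) u by (simp add: Tr_def)
    ultimately show "u \<in> rho ` F n"
      unfolding F_eq[OF assms] by blast
  qed
qed

end
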